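(* Let $0\to A_i\to B_i\to C\to 0$ ($i=1,2$) be short exact sequences of finite abelian groups, and put $B=B_1\times_C B_2$. Assume that the sequence for $i=2$ is a direct sum of sequences of the form $0\to\mathbb Z/n\mathbb Z\to\mathbb Z/nb_j\mathbb Z\to\mathbb Z/b_j\mathbb Z\to0$ (first map multiplication by $b_j$, second the natural projection), for a fixed positive integer $n$ and positive integers $b_j$, and that $A_1$ is annihilated by $n$. Then the projection $B\to B_2$ splits. *)

theory Defs
  imports "HOL-Algebra.Algebra"
begin

definition short_exact ::
  "('a, 'm1) monoid_scheme \<Rightarrow> ('a \<Rightarrow> 'b) \<Rightarrow> ('b, 'm2) monoid_scheme \<Rightarrow> ('b \<Rightarrow> 'c)
   \<Rightarrow> ('c, 'm3) monoid_scheme \<Rightarrow> bool" where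
  "short_exact A f B g C \<longleftrightarrow>
     group A \<and> group B \<and> group C \<and>
     f \<in> hom A B \<and> g \<in> hom B C \<and>
     inj_on f (carrier A) \<and> g ` carrier B = carrier C \<and>
     f ` carrier A = kernel B C g"

definition ses_iso ::
  "('a, 'm1) monoid_scheme \<Rightarrow> ('a \<Rightarrow> 'b) \<Rightarrow> ('b, 'm2) monoid_scheme \<Rightarrow> ('b \<Rightarrow> 'c)
   \<Rightarrow> ('c, 'm3) monoid_scheme \<Rightarrow>
   ('x, 'n1) monoid_scheme \<Rightarrow> ('x \<Rightarrow> 'y) \<Rightarrow> ('y, 'n2) monoid_scheme \<Rightarrow> ('y \<Rightarrow> 'z)
   \<Rightarrow> ('z, 'n3) monoid_scheme \<Rightarrow> bool" where
  "ses_iso A f B g C A' f' B' g' C' \<longleftrightarrow>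
     (\<exists>\<alpha> \<beta> \<gamma>. \<alpha> \<in> iso A A' \<and> \<beta> \<in> iso B B' \<and> \<gamma> \<in> iso C C' \<and>
       (\<forall>x \<in> carrier A. \<beta> (f x) = f' (\<alpha> x)) \<and>
       (\<forall>y \<in> carrier B. \<gamma> (g y) = g' (\<beta> y)))"

definition std_A :: "nat \<Rightarrow> nat \<Rightarrow> (nat \<Rightarrow> int) monoid" where
  "std_A m n = product_group {..<m} (\<lambda>j. integer_mod_group n)"

definition std_B :: "nat \<Rightarrow> nat \<Rightarrow> (nat \<Rightarrow> nat) \<Rightarrow> (nat \<Rightarrow> int) monoid" where
  "std_B m n b = product_group {..<m} (\<lambda>j. integer_mod_group (n * b j))"

definition std_C :: "nat \<Rightarrow> (nat \<Rightarrow> nat) \<Rightarrow> (nat \<Rightarrow> int) monoid" where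
  "std_C m b = product_group {..<m} (\<lambda>j. integer_mod_group (b j))"

definition std_f :: "nat \<Rightarrow> nat \<Rightarrow> (nat \<Rightarrow> nat) \<Rightarrow> (nat \<Rightarrow> int) \<Rightarrow> (nat \<Rightarrow> int)" where
  "std_f m n b x = (\<lambda>j\<in>{..<m}. (int (b j) * x j) mod int (n * b j))"

definition std_g :: "nat \<Rightarrow> (nat \<Rightarrow> nat) \<Rightarrow> (nat \<Rightarrow> int) \<Rightarrow> (nat \<Rightarrow> int)" where
  "std_g m b y = (\<lambda>j\<in>{..<m}. y j mod int (b j))"

definition fiber_product ::
  "('b1, 'm1) monoid_scheme \<Rightarrow> ('b1 \<Rightarrow> 'c) \<Rightarrow> ('b2, 'm2) monoid_scheme \<Rightarrow> ('b2 \<Rightarrow> 'c)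
   \<Rightarrow> ('b1 \<times> 'b2) monoid" where
  "fiber_product B1 g1 B2 g2 =
     (B1 \<times>\<times> B2)\<lparr>carrier := {(x, y). x \<in> carrier B1 \<and> y \<in> carrier B2 \<and> g1 x = g2 y}\<rparr>"

end

theory Submission
  imports Defs
begin

text \<open>Transport the second sequence to the standard one, and let \<open>u\<^sub>j \<in> B\<^sub>2\<close> correspond to the
  standard generators of \<open>\<Oplus>\<^sub>j \<int>/n b\<^sub>j\<close>. Their images \<open>c\<^sub>j = g\<^sub>2 u\<^sub>j\<close> satisfy \<open>b\<^sub>j c\<^sub>j = 0\<close>. Lift each \<open>c\<^sub>j\<close>
  to some \<open>x\<^sub>j \<in> B\<^sub>1\<close>: then \<open>b\<^sub>j x\<^sub>j\<close> lies in the image of \<open>A\<^sub>1\<close>, which is killed by \<open>n\<close>, so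
  \<open>n b\<^sub>j x\<^sub>j = 0\<close> and \<open>u\<^sub>j \<mapsto> x\<^sub>j\<close> extends to a homomorphism \<open>H : B\<^sub>2 \<rightarrow> B\<^sub>1\<close>. Since \<open>g\<^sub>1 \<circ> H\<close> and
  \<open>g\<^sub>2\<close> agree on the generators, \<open>y \<mapsto> (H y, y)\<close> is a section of \<open>B \<rightarrow> B\<^sub>2\<close>.\<close>

lemma (in group) int_pow_mod_eq:
  assumes "x \<in> carrier G" "x [^] (N::nat) = \<one>"
  shows "x [^] (a mod int N) = x [^] (a::int)"
proof -
  have "x [^] a = x [^] (int N * (a div int N)) \<otimes> x [^] (a mod int N)"
    using assms(1) by (simp flip: int_pow_mult)
  also have "x [^] (int N * (a div int N)) = \<one>"
    using assms by (simp flip: int_pow_pow add: int_pow_int)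
  finally show ?thesis
    using assms(1) by simp
qed

lemma comm_group_hom_finprod:
  assumes "comm_group G" "comm_group H" "h \<in> hom G H" "f \<in> A \<rightarrow> carrier G"
  shows "h (finprod G f A) = finprod H (\<lambda>i. h (f i)) A"
proof -
  interpret G: comm_group G by fact
  interpret H: comm_group H by fact
  have h1: "h \<one>\<^bsub>G\<^esub> = \<one>\<^bsub>H\<^esub>"
    using hom_one[OF assms(3) G.is_group H.is_group] .
  show ?thesis
    using assms(4)
  proof (induction A rule: infinite_finite_induct)
    case (insert a A)
    then show ?case
      using assms(3) by (simp add: hom_mult Pi_def hom_in_carrier)
  qed (simp_all add: h1)
qed

lemma int_pow_product_group:
  assumes G: "\<And>i. i \<in> I \<Longrightarrow> group (G i)" and x: "x \<in> carrier (product_group I G)"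
  shows "x [^]\<^bsub>product_group I G\<^esub> (k::int) = (\<lambda>i\<in>I. x i [^]\<^bsub>G i\<^esub> k)"
proof -
  have nat_pow: "x [^]\<^bsub>product_group I G\<^esub> (n::nat) = (\<lambda>i\<in>I. x i [^]\<^bsub>G i\<^esub> n)" for n
  proof (induction n)
    case (Suc n)
    then show ?case by (simp add: fun_eq_iff)
  qed simp
  show ?thesis
  proof (cases "k < 0")
    case True
    have "x [^]\<^bsub>product_group I G\<^esub> k = inv\<^bsub>product_group I G\<^esub> (x [^]\<^bsub>product_group I G\<^esub> nat (- k))"
      using True by (simp only: int_pow_def2 if_True)
    also have "\<dots> = inv\<^bsub>product_group I G\<^esub> (\<lambda>i\<in>I. x i [^]\<^bsub>G i\<^esub> nat (- k))"
      by (simp only: nat_pow)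
    also have "\<dots> = (\<lambda>i\<in>I. inv\<^bsub>G i\<^esub> (x i [^]\<^bsub>G i\<^esub> nat (- k)))"
    proof -
      have "x i [^]\<^bsub>G i\<^esub> nat (- k) \<in> carrier (G i)" if "i \<in> I" for i
        using x G[OF that] that by (simp add: PiE_iff group.is_monoid monoid.nat_pow_closed)
      then show ?thesis
        using G by (subst inv_product_group) (auto intro: restrict_ext)
    qed
    also have "\<dots> = (\<lambda>i\<in>I. x i [^]\<^bsub>G i\<^esub> k)"
      using True by (simp only: int_pow_def2 if_True)
    finally show ?thesis .
  next
    case False
    then show ?thesis
      by (simp only: int_pow_def2 if_False nat_pow)
  qed
qed

abbreviation ZMod_product :: "nat \<Rightarrow> (nat \<Rightarrow> nat) \<Rightarrow> (nat \<Rightarrow> int) monoid" where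
  "ZMod_product m N \<equiv> product_group {..<m} (\<lambda>j. integer_mod_group (N j))"

text \<open>The entry \<open>1\<close> is reduced modulo \<open>N j\<close> so that it lies in the carrier also when \<open>N j = 1\<close>.\<close>
definition basis_vector :: "nat \<Rightarrow> (nat \<Rightarrow> nat) \<Rightarrow> nat \<Rightarrow> nat \<Rightarrow> int" where
  "basis_vector m N j = (\<lambda>i\<in>{..<m}. if i = j then 1 mod int (N j) else 0)"

lemma comm_group_ZMod_product: "comm_group (ZMod_product m N)"
  by (rule group.group_comm_groupI) (auto simp: fun_eq_iff add.commute)

lemma ZMod_product_carrier_mod:
  assumes "y \<in> carrier (ZMod_product m N)" "i < m"
  shows "y i mod int (N i) = y i"
proof -
  have "N i = 0 \<or> 0 \<le> y i \<and> y i < int (N i)"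
    using assms by (auto simp: PiE_iff carrier_integer_mod_group split: if_splits)
  then show ?thesis
    by auto
qed

lemma basis_vector_closed:
  "j < m \<Longrightarrow> basis_vector m N j \<in> carrier (ZMod_product m N)"
  by (auto simp: basis_vector_def carrier_integer_mod_group)

lemma basis_vector_int_pow:
  assumes "j < m"
  shows "basis_vector m N j [^]\<^bsub>ZMod_product m N\<^esub> (k::int)
           = (\<lambda>i\<in>{..<m}. if i = j then k mod int (N j) else 0)"
  using basis_vector_closed[OF assms]
  by (auto simp: int_pow_product_group int_pow_integer_mod_group basis_vector_def fun_eq_iff
      mod_mult_right_eq)

lemma ZMod_product_decomp:
  assumes y: "y \<in> carrier (ZMod_product m N)"
  shows "finprod (ZMod_product m N) (\<lambda>j. basis_vector m N j [^]\<^bsub>ZMod_product m N\<^esub> y j) {..<m} = y"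
proof -
  interpret P: comm_group "ZMod_product m N"
    by (rule comm_group_ZMod_product)
  have closed: "basis_vector m N j [^]\<^bsub>ZMod_product m N\<^esub> k \<in> carrier (ZMod_product m N)"
    if "j < m" for j and k :: int
    using basis_vector_closed[OF that] by (rule P.int_pow_closed)
  have prefix: "finprod (ZMod_product m N) (\<lambda>j. basis_vector m N j [^]\<^bsub>ZMod_product m N\<^esub> y j) {..<p}
          = (\<lambda>i\<in>{..<m}. if i < p then y i else 0)" if "p \<le> m" for p
    using that
  proof (induction p)
    case (Suc p)
    have "finprod (ZMod_product m N) (\<lambda>j. basis_vector m N j [^]\<^bsub>ZMod_product m N\<^esub> y j) {..<Suc p}
        = basis_vector m N p [^]\<^bsub>ZMod_product m N\<^esub> y p \<otimes>\<^bsub>ZMod_product m N\<^esub>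
          finprod (ZMod_product m N) (\<lambda>j. basis_vector m N j [^]\<^bsub>ZMod_product m N\<^esub> y j) {..<p}"
      unfolding lessThan_Suc
      by (intro P.finprod_insert funcsetI closed) (use Suc.prems in auto)
    also have "\<dots> = (\<lambda>i\<in>{..<m}. if i < Suc p then y i else 0)"
      using Suc ZMod_product_carrier_mod[OF y]
      by (auto simp: basis_vector_int_pow fun_eq_iff less_Suc_eq)
    finally show ?case .
  next
    case 0
    have "(\<lambda>i\<in>{..<m}. if i < 0 then y i else 0) = \<one>\<^bsub>ZMod_product m N\<^esub>"
      by simp
    then show ?case
      by simp
  qed
  have "(\<lambda>i\<in>{..<m}. if i < m then y i else 0) = restrict y {..<m}"
    by (rule restrict_ext) simp
  also have "\<dots> = y"
    using y by (simp add: PiE_restrict)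
  finally show ?thesis
    using prefix[of m] by simp
qed

lemma hom_ZMod_product_eqI:
  assumes G: "comm_group G"
    and hom: "\<phi> \<in> hom (ZMod_product m N) G" "\<psi> \<in> hom (ZMod_product m N) G"
    and basis: "\<And>j. j < m \<Longrightarrow> \<phi> (basis_vector m N j) = \<psi> (basis_vector m N j)"
    and y: "y \<in> carrier (ZMod_product m N)"
  shows "\<phi> y = \<psi> y"
proof -
  interpret G: comm_group G by fact
  interpret P: comm_group "ZMod_product m N" by (rule comm_group_ZMod_product)
  have expand: "h y = finprod G (\<lambda>j. h (basis_vector m N j) [^]\<^bsub>G\<^esub> y j) {..<m}"
    if h: "h \<in> hom (ZMod_product m N) G" for h
  proof -
    have "h y = h (finprod (ZMod_product m N)
                    (\<lambda>j. basis_vector m N j [^]\<^bsub>ZMod_product m N\<^esub> y j) {..<m})"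
      using ZMod_product_decomp[OF y] by simp
    also have "\<dots> = finprod G (\<lambda>j. h (basis_vector m N j [^]\<^bsub>ZMod_product m N\<^esub> y j)) {..<m}"
      using basis_vector_closed
      by (intro comm_group_hom_finprod[OF comm_group_ZMod_product G h] funcsetI P.int_pow_closed) auto
    also have "\<dots> = finprod G (\<lambda>j. h (basis_vector m N j) [^]\<^bsub>G\<^esub> y j) {..<m}"
      using basis_vector_closed hom_in_carrier[OF h]
      by (intro G.finprod_cong' funcsetI G.int_pow_closed) (auto simp: hom_int_pow[OF h])
    finally show ?thesis .
  qed
  show ?thesis
    unfolding expand[OF hom(1)] expand[OF hom(2)] using basis_vector_closed hom_in_carrier[OF hom(2)]
    by (intro G.finprod_cong' funcsetI G.int_pow_closed) (auto simp: basis)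
qed

definition ZMod_product_map :: "('g, 's) monoid_scheme \<Rightarrow> nat \<Rightarrow> (nat \<Rightarrow> 'g) \<Rightarrow> (nat \<Rightarrow> int) \<Rightarrow> 'g" where
  "ZMod_product_map G m x y = finprod G (\<lambda>j. x j [^]\<^bsub>G\<^esub> y j) {..<m}"

context comm_group
begin

lemma ZMod_product_map_hom:
  assumes x: "\<And>j. j < m \<Longrightarrow> x j \<in> carrier G" "\<And>j. j < m \<Longrightarrow> x j [^] N j = \<one>"
  shows "ZMod_product_map G m x \<in> hom (ZMod_product m N) G"
proof (rule homI)
  show "ZMod_product_map G m x y \<in> carrier G" for y
    unfolding ZMod_product_map_def using x by (intro finprod_closed funcsetI) auto
next
  fix y z
  assume y: "y \<in> carrier (ZMod_product m N)" and z: "z \<in> carrier (ZMod_product m N)"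
  have "ZMod_product_map G m x (y \<otimes>\<^bsub>ZMod_product m N\<^esub> z)
      = (\<Otimes>j\<in>{..<m}. x j [^] y j \<otimes> x j [^] z j)"
    unfolding ZMod_product_map_def using x
    by (intro finprod_cong') (auto simp: int_pow_mod_eq int_pow_mult)
  also have "\<dots> = ZMod_product_map G m x y \<otimes> ZMod_product_map G m x z"
    unfolding ZMod_product_map_def using x by (intro finprod_multf) auto
  finally show "ZMod_product_map G m x (y \<otimes>\<^bsub>ZMod_product m N\<^esub> z)
      = ZMod_product_map G m x y \<otimes> ZMod_product_map G m x z" .
qed

lemma ZMod_product_map_basis_vector:
  assumes "\<And>j. j < m \<Longrightarrow> x j \<in> carrier G" "\<And>j. j < m \<Longrightarrow> x j [^] N j = \<one>" "j < m"
  shows "ZMod_product_map G m x (basis_vector m N j) = x j"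
proof -
  have "ZMod_product_map G m x (basis_vector m N j) = (\<Otimes>i\<in>{..<m}. if j = i then x i else \<one>)"
    unfolding ZMod_product_map_def using assms
    by (intro finprod_cong') (auto simp: basis_vector_def int_pow_mod_eq)
  also have "\<dots> = x j"
    using assms by (intro finprod_singleton) auto
  finally show ?thesis .
qed

end

lemma exists_lift_from_ZMod_product:
  assumes "comm_group B1" "comm_group C"
    and g1: "g1 \<in> hom B1 C" and g2: "g2 \<in> hom B2 C"
    and \<phi>: "\<phi> \<in> iso (ZMod_product m N) B2"
    and x: "\<And>j. j < m \<Longrightarrow> x j \<in> carrier B1" "\<And>j. j < m \<Longrightarrow> x j [^]\<^bsub>B1\<^esub> N j = \<one>\<^bsub>B1\<^esub>"
    and lifts: "\<And>j. j < m \<Longrightarrow> g1 (x j) = g2 (\<phi> (basis_vector m N j))"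
  shows "\<exists>H \<in> hom B2 B1. \<forall>y \<in> carrier B2. g1 (H y) = g2 y"
proof -
  interpret B1: comm_group B1 by fact
  define K where "K = ZMod_product_map B1 m x"
  define \<psi> where "\<psi> = inv_into (carrier (ZMod_product m N)) \<phi>"
  have K: "K \<in> hom (ZMod_product m N) B1"
    unfolding K_def using x by (rule B1.ZMod_product_map_hom)
  have \<phi>_hom: "\<phi> \<in> hom (ZMod_product m N) B2"
    using \<phi> by (simp add: iso_iff)
  have "group (ZMod_product m N)"
    by simp
  then have \<psi>: "\<psi> \<in> hom B2 (ZMod_product m N)"
    unfolding \<psi>_def using group.iso_set_sym \<phi> by (blast intro: iso_imp_homomorphism)
  have K_lifts: "g1 (K z) = g2 (\<phi> z)" if "z \<in> carrier (ZMod_product m N)" for z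
    using hom_ZMod_product_eqI[OF \<open>comm_group C\<close> hom_compose[OF K g1] hom_compose[OF \<phi>_hom g2] _ that]
    by (simp add: K_def x B1.ZMod_product_map_basis_vector lifts)
  show ?thesis
  proof (intro bexI[of _ "K \<circ> \<psi>"] ballI)
    fix y
    assume y: "y \<in> carrier B2"
    then have "\<phi> (\<psi> y) = y"
      using \<phi> by (auto simp: \<psi>_def iso_iff f_inv_into_f)
    then show "g1 ((K \<circ> \<psi>) y) = g2 y"
      using K_lifts[OF hom_in_carrier[OF \<psi> y]] by simp
  qed (rule hom_compose[OF \<psi> K])
qed

lemma short_exact_pow_eq_one:
  fixes n k :: nat
  assumes ses: "short_exact A f B g C"
    and ann: "\<And>a. a \<in> carrier A \<Longrightarrow> a [^]\<^bsub>A\<^esub> n = \<one>\<^bsub>A\<^esub>"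
    and x: "x \<in> carrier B" and gx: "g x [^]\<^bsub>C\<^esub> k = \<one>\<^bsub>C\<^esub>"
  shows "x [^]\<^bsub>B\<^esub> (n * k) = \<one>\<^bsub>B\<^esub>"
proof -
  have A: "group A" and B: "group B" and C: "group C" and f: "f \<in> hom A B" and g: "g \<in> hom B C"
    and ker: "f ` carrier A = kernel B C g"
    using ses unfolding short_exact_def by blast+
  interpret B: group B by fact
  have "x [^]\<^bsub>B\<^esub> k \<in> kernel B C g"
    using x gx hom_nat_pow[OF g x B C] by (simp add: kernel_def)
  then obtain a where a: "a \<in> carrier A" "f a = x [^]\<^bsub>B\<^esub> k"
    unfolding ker[symmetric] by (rule imageE) (rule that, simp_all)
  have "x [^]\<^bsub>B\<^esub> (n * k) = (x [^]\<^bsub>B\<^esub> k) [^]\<^bsub>B\<^esub> n"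
    using x by (simp add: B.nat_pow_pow mult.commute)
  also have "\<dots> = f (a [^]\<^bsub>A\<^esub> n)"
    using a hom_nat_pow[OF f a(1) A B] by simp
  also have "\<dots> = \<one>\<^bsub>B\<^esub>"
    using a ann hom_one[OF f A B] by simp
  finally show ?thesis .
qed

lemma std_g_basis_vector:
  "j < m \<Longrightarrow> std_g m b (basis_vector m (\<lambda>j. n * b j) j) = basis_vector m b j"
  by (auto simp: std_g_def basis_vector_def fun_eq_iff mod_mod_cancel)

lemma ses_iso_std_basis_torsion:
  assumes std: "ses_iso A f B g C (std_A m n) (std_f m n b) (std_B m n b) (std_g m b) (std_C m b)"
    and "group B" "group C" and g: "g \<in> hom B C"
  obtains \<phi> where "\<phi> \<in> iso (std_B m n b) B"
    and "\<And>j. j < m \<Longrightarrow> g (\<phi> (basis_vector m (\<lambda>j. n * b j) j)) [^]\<^bsub>C\<^esub> b j = \<one>\<^bsub>C\<^esub>"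
proof -
  interpret C: group C by fact
  from std obtain \<beta> \<gamma> where \<beta>: "\<beta> \<in> iso B (std_B m n b)" and \<gamma>: "\<gamma> \<in> iso C (std_C m b)"
    and sq: "\<forall>y \<in> carrier B. \<gamma> (g y) = std_g m b (\<beta> y)"
    unfolding ses_iso_def by blast
  define \<phi> where "\<phi> = inv_into (carrier B) \<beta>"
  have \<phi>: "\<phi> \<in> iso (std_B m n b) B"
    unfolding \<phi>_def using group.iso_set_sym[OF \<open>group B\<close> \<beta>] .
  have "g (\<phi> e) [^]\<^bsub>C\<^esub> b j = \<one>\<^bsub>C\<^esub>"
    if j: "j < m" and e: "e = basis_vector m (\<lambda>j. n * b j) j" for j e
  proof -
    have e_carrier: "e \<in> carrier (std_B m n b)"
      unfolding e std_B_def using j by (rule basis_vector_closed)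
    then have u: "\<phi> e \<in> carrier B" "\<beta> (\<phi> e) = e"
      using \<phi> \<beta> by (auto simp: \<phi>_def iso_iff hom_in_carrier f_inv_into_f)
    have g_u: "g (\<phi> e) \<in> carrier C"
      using g u(1) by (rule hom_in_carrier)
    have "\<gamma> (g (\<phi> e) [^]\<^bsub>C\<^esub> b j) = basis_vector m b j [^]\<^bsub>std_C m b\<^esub> int (b j)"
      using hom_nat_pow[OF iso_imp_homomorphism[OF \<gamma>] g_u C.is_group] sq u j e
      by (simp add: std_g_basis_vector int_pow_int std_C_def)
    also have "\<dots> = \<one>\<^bsub>std_C m b\<^esub>"
      using j by (simp add: std_C_def basis_vector_int_pow fun_eq_iff)
    also have "\<dots> = \<gamma> \<one>\<^bsub>C\<^esub>"
      using hom_one[OF iso_imp_homomorphism[OF \<gamma>] C.is_group] by (simp add: std_C_def)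
    finally show ?thesis
      using \<gamma> g_u by (auto simp: iso_iff dest: inj_onD)
  qed
  with \<phi> show thesis
    using that by blast
qed

lemma hom_fiber_product_section:
  assumes "H \<in> hom B2 B1" "\<And>y. y \<in> carrier B2 \<Longrightarrow> g1 (H y) = g2 y"
  shows "(\<lambda>y. (H y, y)) \<in> hom B2 (fiber_product B1 g1 B2 g2)"
  using assms unfolding hom_def fiber_product_def by (auto simp: DirProd_def)

theorem mainTheorem5:
  fixes A1 :: "('a, 'm1) monoid_scheme" and B1 :: "('b, 'm2) monoid_scheme"
    and C :: "('c, 'm3) monoid_scheme"
    and A2 :: "('d, 'm4) monoid_scheme" and B2 :: "('e, 'm5) monoid_scheme"
    and f1 :: "'a \<Rightarrow> 'b" and g1 :: "'b \<Rightarrow> 'c"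
    and f2 :: "'d \<Rightarrow> 'e" and g2 :: "'e \<Rightarrow> 'c"
    and n m :: nat and b :: "nat \<Rightarrow> nat"
  assumes "comm_group A1" "comm_group B1" "comm_group C" "comm_group A2" "comm_group B2"
    and "finite (carrier A1)" "finite (carrier B1)" "finite (carrier C)"
    and "finite (carrier A2)" "finite (carrier B2)"
    and ses1: "short_exact A1 f1 B1 g1 C"
    and ses2: "short_exact A2 f2 B2 g2 C"
    and "n > 0" and "\<forall>j<m. b j > 0"
    and std: "ses_iso A2 f2 B2 g2 C (std_A m n) (std_f m n b) (std_B m n b) (std_g m b) (std_C m b)"
    and ann: "\<forall>x \<in> carrier A1. x [^]\<^bsub>A1\<^esub> n = \<one>\<^bsub>A1\<^esub>"
  shows "\<exists>s \<in> hom B2 (fiber_product B1 g1 B2 g2). \<forall>y \<in> carrier B2. snd (s y) = y"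
proof -
  have g1: "g1 \<in> hom B1 C" and g1_onto: "g1 ` carrier B1 = carrier C"
    and g2: "g2 \<in> hom B2 C" and B2: "group B2" and C: "group C"
    using ses1 ses2 unfolding short_exact_def by blast+
  obtain \<phi> where \<phi>: "\<phi> \<in> iso (std_B m n b) B2"
    and torsion: "\<And>j. j < m \<Longrightarrow> g2 (\<phi> (basis_vector m (\<lambda>j. n * b j) j)) [^]\<^bsub>C\<^esub> b j = \<one>\<^bsub>C\<^esub>"
    using ses_iso_std_basis_torsion[OF std B2 C g2] by blast
  define x where "x j = inv_into (carrier B1) g1 (g2 (\<phi> (basis_vector m (\<lambda>j. n * b j) j)))" for j
  have "g2 (\<phi> (basis_vector m (\<lambda>j. n * b j) j)) \<in> g1 ` carrier B1" if "j < m" for j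
  proof -
    have "basis_vector m (\<lambda>j. n * b j) j \<in> carrier (std_B m n b)"
      unfolding std_B_def using that by (rule basis_vector_closed)
    then show ?thesis
      unfolding g1_onto using hom_in_carrier[OF g2] hom_in_carrier[OF iso_imp_homomorphism[OF \<phi>]]
      by blast
  qed
  then have x: "\<And>j. j < m \<Longrightarrow> x j \<in> carrier B1"
    and lifts: "\<And>j. j < m \<Longrightarrow> g1 (x j) = g2 (\<phi> (basis_vector m (\<lambda>j. n * b j) j))"
    unfolding x_def by (auto intro: inv_into_into f_inv_into_f)
  have x_order: "x j [^]\<^bsub>B1\<^esub> (n * b j) = \<one>\<^bsub>B1\<^esub>" if "j < m" for j
    using short_exact_pow_eq_one[OF ses1 ann[rule_format] x[OF that]] torsion[OF that]
    by (simp add: lifts[OF that])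
  obtain H where H: "H \<in> hom B2 B1" and H_lifts: "\<forall>y \<in> carrier B2. g1 (H y) = g2 y"
    using exists_lift_from_ZMod_product[OF \<open>comm_group B1\<close> \<open>comm_group C\<close> g1 g2
        \<phi>[unfolded std_B_def] x x_order lifts]
    by blast
  show ?thesis
    using hom_fiber_product_section[OF H] H_lifts by force
qed

end
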